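(* Let $p$ be a prime, $\Delta<0$ a discriminant, and $(A,B,C)\in \mathrm{CL}(\Delta p^2)$. Let $(a,b,c)\in\mathrm{CL}(\Delta)$ be the (unique) class with $(A,B,C)\in\Psi_p(a,b,c)$. Then $$P_{p,0}(A,B,C,q)=(a,b,c,q^{p^2}).$$
   Context: A form $(a,b,c)$ denotes the $SL(2,\mathbb Z)$-equivalence class of the positive definite form $ax^2+bxy+cy^2$ ($a>0$) of discriminant $b^2-4ac<0$; it is primitive if $\gcd(a,b,c)=1$, and $\mathrm{CL}(\Delta)$ is the set of classes of primitive forms of discriminant $\Delta$. The theta series $(a,b,c,q):=\sum_{(x,y)\in\mathbb Z^2}q^{ax^2+bxy+cy^2}$ depends only on the class; $(a,b,c,q^k)$ is this series with $q\mapsto q^k$. For $m\ge1$, $0\le r<m$: $P_{m,r}\sum_{n\ge0}a(n)q^n=\sum_{n\ge0}a(mn+r)q^{mn+r}$. For a prime $p$ and primitive $(a,b,c)$ of discriminant $\Delta$, $\Psi_p(a,b,c)$ is the set of distinct classes of primitive forms occurring in the list $(a,bp,cp^2)$, $(ap^2,\,p(b+2ah),\,ah^2+bh+c)$ ($0\le h<p$) of forms of discriminant $\Delta p^2$. Known fact (Buell): $\Psi_p$ is well defined on classes, and the sets $\Psi_p(f)$, $f\in\mathrm{CL}(\Delta)$, are pairwise disjoint and partition $\mathrm{CL}(\Delta p^2)$; moreover each class of $\Psi_p(a,b,c)$ occurs exactly $w$ times in the list, where $w=3$ if $\Delta=-3$, $w=2$ if $\Delta=-4$, $w=1$ if $\Delta<-4$.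 *)

theory Defs
  imports "HOL-Computational_Algebra.Computational_Algebra"
begin

type_synonym form = "int \<times> int \<times> int"

definition form_val :: "form \<Rightarrow> int \<Rightarrow> int \<Rightarrow> int" where
  "form_val f x y = (case f of (a, b, c) \<Rightarrow> a * x^2 + b * x * y + c * y^2)"

definition disc :: "form \<Rightarrow> int" where
  "disc f = (case f of (a, b, c) \<Rightarrow> b^2 - 4 * a * c)"

definition pos_def_form :: "form \<Rightarrow> bool" where
  "pos_def_form f = (case f of (a, b, c) \<Rightarrow> a > 0 \<and> disc f < 0)"

definition primitive_form :: "form \<Rightarrow> bool" where
  "primitive_form f = (case f of (a, b, c) \<Rightarrow> gcd a (gcd b c) = 1)"

text \<open>Action of the matrix (al be; ga de) in SL(2,Z): (x,y) to (al x + be y, ga x + de y).\<close>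
definition form_act :: "form \<Rightarrow> int \<Rightarrow> int \<Rightarrow> int \<Rightarrow> int \<Rightarrow> form" where
  "form_act f al be ga de = (case f of (a, b, c) \<Rightarrow>
     (a*al^2 + b*al*ga + c*ga^2,
      2*a*al*be + b*(al*de + be*ga) + 2*c*ga*de,
      a*be^2 + b*be*de + c*de^2))"

definition form_equiv :: "form \<Rightarrow> form \<Rightarrow> bool" where
  "form_equiv f g = (\<exists>al be ga de. al*de - be*ga = 1 \<and> g = form_act f al be ga de)"

definition form_class :: "form \<Rightarrow> form set" where
  "form_class f = {g. form_equiv f g}"

definition CL :: "int \<Rightarrow> form set set" where
  "CL D = {form_class f | f. pos_def_form f \<and> primitive_form f \<and> disc f = D}"

definition Psi_list :: "nat \<Rightarrow> form \<Rightarrow> form list" where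
  "Psi_list p f = (case f of (a, b, c) \<Rightarrow>
     (a, b * int p, c * int p^2) #
     map (\<lambda>h. (a * int p^2, int p * (b + 2*a*h), a*h^2 + b*h + c)) [0..int p - 1])"

definition Psi :: "nat \<Rightarrow> form \<Rightarrow> form set set" where
  "Psi p f = form_class ` {g \<in> set (Psi_list p f). primitive_form g}"

definition theta :: "form \<Rightarrow> int fps" where
  "theta f = Abs_fps (\<lambda>n. int (card {(x, y). form_val f x y = int n}))"

definition P_op :: "nat \<Rightarrow> nat \<Rightarrow> int fps \<Rightarrow> int fps" where
  "P_op m r F = Abs_fps (\<lambda>n. if n mod m = r then F $ n else 0)"

end

theory Submission
  imports Defs
begin

text \<open>Buell's list consists of the forms g with g(M v) = p^2 f(v), where f = (a,b,c) and M is
  diag(p,1) or [[1,-h],[0,p]]. Primitivity of g makes its corner coefficient prime to p, so p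
  divides g(x,y) only if (x,y) lies in the lattice M Z^2. Hence v -> M v maps the representations
  of k by f bijectively onto those of p^2 k by g, while g represents no multiple of p that is not
  a multiple of p^2. Since theta series are class invariants, this is the claim.\<close>

lemma fps_compose_X_power_nth:
  fixes F :: "'a::comm_semiring_1 fps"
  assumes "k > 0"
  shows "(F oo fps_X ^ k) $ n = (if k dvd n then F $ (n div k) else 0)"
proof -
  have "(F oo fps_X ^ k) $ n = (\<Sum>i = 0..n. if i = n div k \<and> k dvd n then F $ i else 0)"
    using assms by (auto simp: fps_compose_nth power_mult[symmetric] intro!: sum.cong)
  also have "\<dots> = (if k dvd n then F $ (n div k) else 0)"
    by (simp add: sum.delta')
  finally show ?thesis .
qed

definition representations :: "form \<Rightarrow> int \<Rightarrow> (int \<times> int) set" where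
  "representations f n = {(x, y). form_val f x y = n}"

lemma theta_nth: "theta f $ n = int (card (representations f (int n)))"
  by (simp add: theta_def representations_def)

definition lin_map :: "int \<Rightarrow> int \<Rightarrow> int \<Rightarrow> int \<Rightarrow> int \<times> int \<Rightarrow> int \<times> int" where
  "lin_map al be ga de v = (al * fst v + be * snd v, ga * fst v + de * snd v)"

lemma lin_map_adjugate:
  "lin_map al be ga de (lin_map de (- be) (- ga) al v) = ((al*de - be*ga) * fst v, (al*de - be*ga) * snd v)"
  "lin_map de (- be) (- ga) al (lin_map al be ga de v) = ((al*de - be*ga) * fst v, (al*de - be*ga) * snd v)"
  by (simp_all add: lin_map_def algebra_simps)

lemma inj_lin_map:
  assumes "al * de - be * ga \<noteq> 0"
  shows "inj (lin_map al be ga de)"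
proof (rule injI)
  fix u v assume "lin_map al be ga de u = lin_map al be ga de v"
  then have "lin_map de (- be) (- ga) al (lin_map al be ga de u) = lin_map de (- be) (- ga) al (lin_map al be ga de v)"
    by simp
  with assms show "u = v"
    by (simp only: lin_map_adjugate) (simp add: prod_eq_iff)
qed

lemma lin_map_inverse:
  assumes "al * de - be * ga = 1"
  shows "lin_map al be ga de (lin_map de (- be) (- ga) al v) = v"
    and "lin_map de (- be) (- ga) al (lin_map al be ga de v) = v"
  using assms by (simp_all add: lin_map_adjugate)

lemma form_val_form_act:
  "form_val (form_act f al be ga de) x y = form_val f (al*x + be*y) (ga*x + de*y)"
  by (cases f) (simp add: form_val_def form_act_def power2_eq_square algebra_simps)

lemma bij_betw_representations_form_act:
  assumes "al * de - be * ga = 1"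
  shows "bij_betw (lin_map al be ga de) (representations (form_act f al be ga de) n) (representations f n)"
proof (rule bij_betw_byWitness[where f' = "lin_map de (- be) (- ga) al"])
  have transport: "v \<in> representations (form_act f al be ga de) n \<longleftrightarrow> lin_map al be ga de v \<in> representations f n" for v
    by (auto simp: representations_def form_val_form_act lin_map_def split: prod.splits)
  show "lin_map al be ga de ` representations (form_act f al be ga de) n \<subseteq> representations f n"
    using transport by blast
  show "lin_map de (- be) (- ga) al ` representations f n \<subseteq> representations (form_act f al be ga de) n"
  proof (rule image_subsetI)
    fix v assume "v \<in> representations f n"
    then have "lin_map al be ga de (lin_map de (- be) (- ga) al v) \<in> representations f n"
      by (simp add: lin_map_inverse[OF assms])
    then show "lin_map de (- be) (- ga) al v \<in> representations (form_act f al be ga de) n"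
      using transport by blast
  qed
qed (simp_all add: lin_map_inverse[OF assms])

lemma theta_form_act:
  assumes "al * de - be * ga = 1"
  shows "theta (form_act f al be ga de) = theta f"
  by (rule fps_ext) (simp add: theta_nth bij_betw_same_card[OF bij_betw_representations_form_act[OF assms]])

lemma theta_form_class:
  assumes "g \<in> form_class f"
  shows "theta g = theta f"
  using assms by (auto simp: form_class_def form_equiv_def theta_form_act)

lemma form_class_refl: "f \<in> form_class f"
proof -
  have "form_act f 1 0 0 1 = f"
    by (cases f) (simp add: form_act_def)
  then show ?thesis
    unfolding form_class_def form_equiv_def
    by (intro CollectI exI[of _ 1] exI[of _ 0]) simp
qed

lemma card_representations_eq_scaled:
  assumes "al * de - be * ga \<noteq> 0"
    and scaled: "\<And>x y. form_val g (al*x + be*y) (ga*x + de*y) = k * form_val f x y"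
    and lattice: "\<And>x y. d dvd form_val g x y \<Longrightarrow> (x, y) \<in> range (lin_map al be ga de)"
    and "d dvd n"
  shows "card (representations g n) = card {(x, y). k * form_val f x y = n}"
proof -
  have transported: "lin_map al be ga de v \<in> representations g n \<longleftrightarrow> v \<in> {(x, y). k * form_val f x y = n}" for v
    by (cases v) (simp add: representations_def lin_map_def scaled)
  have "representations g n = lin_map al be ga de ` {(x, y). k * form_val f x y = n}"
  proof (intro equalityI subsetI)
    fix u assume u: "u \<in> representations g n"
    with lattice \<open>d dvd n\<close> have "u \<in> range (lin_map al be ga de)"
      by (cases u) (simp add: representations_def)
    then obtain v where "u = lin_map al be ga de v"
      by blast
    with u transported show "u \<in> lin_map al be ga de ` {(x, y). k * form_val f x y = n}"
      by blast
  qed (use transported in blast)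
  then show ?thesis
    using inj_lin_map[OF assms(1)] by (simp add: card_image inj_on_subset)
qed

lemma Collect_scaled_form_val_eq:
  assumes "k \<noteq> 0"
  shows "{(x, y). k * form_val f x y = n} = (if k dvd n then representations f (n div k) else {})"
  using assms by (auto simp: representations_def)

lemma P_op_theta_eq_compose_theta:
  fixes m :: nat
  assumes "m > 0" and "al * de - be * ga \<noteq> 0"
    and scaled: "\<And>x y. form_val g (al*x + be*y) (ga*x + de*y) = int m ^ 2 * form_val f x y"
    and lattice: "\<And>x y. int m dvd form_val g x y \<Longrightarrow> (x, y) \<in> range (lin_map al be ga de)"
  shows "P_op m 0 (theta g) = theta f oo fps_X ^ (m ^ 2)"
proof (rule fps_ext)
  fix n
  show "P_op m 0 (theta g) $ n = (theta f oo fps_X ^ (m ^ 2)) $ n"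
  proof (cases "m dvd n")
    case False
    then have "n mod m \<noteq> 0" and "\<not> m ^ 2 dvd n"
      by (auto simp: power2_eq_square dvd_eq_mod_eq_0[symmetric] dest: dvd_mult_left)
    with \<open>m > 0\<close> show ?thesis
      by (simp add: P_op_def fps_compose_X_power_nth)
  next
    case True
    then have "card (representations g (int n)) = card {(x, y). int m ^ 2 * form_val f x y = int n}"
      by (intro card_representations_eq_scaled[OF assms(2) scaled lattice]) auto
    with True have "P_op m 0 (theta g) $ n = int (card {(x, y). int m ^ 2 * form_val f x y = int n})"
      by (simp add: P_op_def theta_nth)
    also have "\<dots> = (theta f oo fps_X ^ (m ^ 2)) $ n"
    proof -
      have "int m ^ 2 dvd int n \<longleftrightarrow> m ^ 2 dvd n"
        by (metis int_dvd_int_iff of_nat_power)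
      with \<open>m > 0\<close> show ?thesis
        by (simp add: Collect_scaled_form_val_eq fps_compose_X_power_nth theta_nth zdiv_int)
    qed
    finally show ?thesis .
  qed
qed

lemma primitive_form_not_prime_dvd_all:
  assumes "primitive_form (a, b, c)" and "prime (q :: int)"
  shows "\<not> (q dvd a \<and> q dvd b \<and> q dvd c)"
proof
  assume "q dvd a \<and> q dvd b \<and> q dvd c"
  then have "q dvd gcd a (gcd b c)"
    by simp
  with assms show False
    by (simp add: primitive_form_def not_prime_unit)
qed

lemma prime_dvd_of_dvd_quadratic:
  fixes q a x t :: int
  assumes "prime q" and "\<not> q dvd a" and "q dvd a * x ^ 2 + q * t"
  shows "q dvd x"
proof -
  from assms(3) have "q dvd a * x ^ 2"
    by (simp add: dvd_add_left_iff)
  with assms(1,2) show ?thesis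
    by (simp add: prime_dvd_mult_iff prime_dvd_power_iff)
qed

lemma P_op_theta_Psi_list_head:
  assumes "prime p" and "primitive_form (a, b * int p, c * int p ^ 2)"
  shows "P_op p 0 (theta (a, b * int p, c * int p ^ 2)) = theta (a, b, c) oo fps_X ^ (p ^ 2)"
proof (rule P_op_theta_eq_compose_theta[where al = "int p" and be = 0 and ga = 0 and de = 1])
  have q: "prime (int p)"
    using assms(1) by simp
  then have "\<not> int p dvd a"
    using primitive_form_not_prime_dvd_all[OF assms(2) q] by (simp add: power2_eq_square)
  moreover have "form_val (a, b * int p, c * int p ^ 2) x y = a * x ^ 2 + int p * (b * x * y + c * int p * y ^ 2)" for x y
    by (simp add: form_val_def power2_eq_square algebra_simps)
  ultimately have p_dvd: "int p dvd x" if "int p dvd form_val (a, b * int p, c * int p ^ 2) x y" for x y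
    using prime_dvd_of_dvd_quadratic[OF q] that by metis
  show "(x, y) \<in> range (lin_map (int p) 0 0 1)"
    if p_dvd_val: "int p dvd form_val (a, b * int p, c * int p ^ 2) x y" for x y
  proof -
    obtain u where "x = int p * u"
      using p_dvd[OF p_dvd_val] by (elim dvdE)
    then have "(x, y) = lin_map (int p) 0 0 1 (u, y)"
      by (simp add: lin_map_def)
    then show ?thesis
      by (metis rangeI)
  qed
qed (use assms(1) prime_gt_0_nat in \<open>auto simp: form_val_def power2_eq_square algebra_simps\<close>)

lemma P_op_theta_Psi_list_tail:
  assumes "prime p" and "primitive_form (a * int p ^ 2, int p * (b + 2*a*h), a*h^2 + b*h + c)"
  shows "P_op p 0 (theta (a * int p ^ 2, int p * (b + 2*a*h), a*h^2 + b*h + c)) = theta (a, b, c) oo fps_X ^ (p ^ 2)"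
proof (rule P_op_theta_eq_compose_theta[where al = 1 and be = "- h" and ga = 0 and de = "int p"])
  have q: "prime (int p)"
    using assms(1) by simp
  then have "\<not> int p dvd a*h^2 + b*h + c"
    using primitive_form_not_prime_dvd_all[OF assms(2) q] by (simp add: power2_eq_square)
  moreover have "form_val (a * int p ^ 2, int p * (b + 2*a*h), a*h^2 + b*h + c) x y
      = (a*h^2 + b*h + c) * y ^ 2 + int p * (a * int p * x^2 + (b + 2*a*h) * x * y)" for x y
    by (simp add: form_val_def power2_eq_square algebra_simps)
  ultimately have p_dvd: "int p dvd y" if "int p dvd form_val (a * int p ^ 2, int p * (b + 2*a*h), a*h^2 + b*h + c) x y" for x y
    using prime_dvd_of_dvd_quadratic[OF q] that by metis
  show "(x, y) \<in> range (lin_map 1 (- h) 0 (int p))"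
    if p_dvd_val: "int p dvd form_val (a * int p ^ 2, int p * (b + 2*a*h), a*h^2 + b*h + c) x y" for x y
  proof -
    obtain v where "y = int p * v"
      using p_dvd[OF p_dvd_val] by (elim dvdE)
    then have "(x, y) = lin_map 1 (- h) 0 (int p) (x + h * v, v)"
      by (simp add: lin_map_def)
    then show ?thesis
      by (metis rangeI)
  qed
qed (use assms(1) prime_gt_0_nat in \<open>auto simp: form_val_def power2_eq_square algebra_simps\<close>)

lemma P_op_theta_Psi_list:
  assumes "prime p" and "g \<in> set (Psi_list p (a, b, c))" and "primitive_form g"
  shows "P_op p 0 (theta g) = theta (a, b, c) oo fps_X ^ (p ^ 2)"
  using assms P_op_theta_Psi_list_head P_op_theta_Psi_list_tail
  by (auto simp: Psi_list_def)

theorem lemma4p3: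
  fixes p :: nat and D A B C a b c :: int
  assumes "prime p"
    and "D < 0"
    and "D mod 4 = 0 \<or> D mod 4 = 1"
    and "form_class (A, B, C) \<in> CL (D * int p^2)"
    and "form_class (a, b, c) \<in> CL D"
    and "form_class (A, B, C) \<in> Psi p (a, b, c)"
  shows "P_op p 0 (theta (A, B, C)) = theta (a, b, c) oo (fps_X ^ (p^2))"
proof -
  obtain g where g: "g \<in> set (Psi_list p (a, b, c))" "primitive_form g"
    and same_class: "form_class (A, B, C) = form_class g"
    using assms(6) unfolding Psi_def by blast
  have "(A, B, C) \<in> form_class g"
    using form_class_refl[of "(A, B, C)"] same_class by simp
  then have "theta (A, B, C) = theta g"
    by (rule theta_form_class)
  with P_op_theta_Psi_list[OF assms(1) g] show ?thesis
    by simp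
qed

end
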